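(* Let $N\ge 1$, let $C_1\ge C_2\ge\cdots\ge C_N>0$ be link capacities, let $X$ be a total traffic demand with $0\le X\le \sum_{i=1}^N C_i$, and let $E:[0,C_1]\to\mathbb{R}$ be a strictly concave function (the common per-link cost). Consider the problem of minimizing $E_B(x_1,\dots,x_N)=\sum_{i=1}^N E(x_i)$ subject to $0\le x_i\le C_i$ for all $i$ and $\sum_{i=1}^N x_i = X$. Then $E_B$ attains its minimum over this feasible set at the allocation defined recursively by $x_i=\min\{C_i,\ X-\sum_{j<i}x_j\}$ for $i=1,\dots,N$.
   Context: The allocation $x_i=\min\{C_i, X-\sum_{j<i}x_j\}$ is the sequential "water-filling" allocation: each link is filled to capacity before any traffic is sent on the next one. *)

theory Defs
  imports "HOL-Analysis.Analysis"
begin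

definition strict_concave_on :: "real set \<Rightarrow> (real \<Rightarrow> real) \<Rightarrow> bool" where
  "strict_concave_on S f \<longleftrightarrow>
     (\<forall>x\<in>S. \<forall>y\<in>S. \<forall>t::real. x \<noteq> y \<and> 0 < t \<and> t < 1 \<longrightarrow>
        f ((1 - t) * x + t * y) > (1 - t) * f x + t * f y)"

definition feasible :: "nat \<Rightarrow> (nat \<Rightarrow> real) \<Rightarrow> real \<Rightarrow> (nat \<Rightarrow> real) \<Rightarrow> bool" where
  "feasible N C X x \<longleftrightarrow>
     (\<forall>i\<in>{1..N}. 0 \<le> x i \<and> x i \<le> C i) \<and> (\<Sum>i=1..N. x i) = X"

end

theory Submission
  imports Defs
begin

text \<open>For a concave cost, moving an amount d from a link carrying q to a link carrying
  p with q - d \<le> p never increases E p + E q, since the new pair is more spread out than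
  the old one. Because link 1 has the largest capacity, repeated transfers of this kind
  turn any feasible allocation into one that fills link 1 to min C_1 X without raising the
  cost; the remaining demand is then an instance of the same problem on links 2..N, so
  induction on the first link shows that the sequential water-filling allocation is
  optimal.\<close>

lemma strict_concave_on_imp_concave_on:
  assumes "convex S" and "strict_concave_on S f"
  shows "concave_on S f"
  unfolding concave_on_def
proof (rule convex_onI)
  fix t x y :: real assume t: "0 < t" "t < 1" and xy: "x \<in> S" "y \<in> S"
  have "(1 - t) * f x + t * f y \<le> f ((1 - t) * x + t * y)"
  proof (cases "x = y")
    case False
    then show ?thesis
      using assms(2) t xy unfolding strict_concave_on_def by (meson less_imp_le)
  qed (simp add: algebra_simps)
  then show "- f ((1 - t) *\<^sub>R x + t *\<^sub>R y) \<le> (1 - t) * - f x + t * - f y"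
    by simp
qed (fact assms(1))

lemma concave_on_outer_pair_le:
  fixes f :: "real \<Rightarrow> real"
  assumes "concave_on S f" and "u \<in> S" "v \<in> S"
    and "u \<le> p" "p \<le> v" "u \<le> q" "q \<le> v" and "p + q = u + v"
  shows "f u + f v \<le> f p + f q"
proof (cases "u = v")
  case True
  then show ?thesis using assms by simp
next
  case False
  define t where "t = (p - u) / (v - u)"
  have t: "0 \<le> t" "t \<le> 1" using assms False by (auto simp: t_def divide_le_eq_1)
  have "t * (v - u) = p - u" using False by (simp add: t_def)
  then have p: "p = (1 - t) * u + t * v" and q: "q = (1 - (1 - t)) * u + (1 - t) * v"
    using assms(8) by (simp_all add: algebra_simps)
  have "(1 - t) * f u + t * f v \<le> f p"
    using concave_onD[OF assms(1) t assms(2,3)] p by simp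
  moreover have "(1 - (1 - t)) * f u + (1 - t) * f v \<le> f q"
    using concave_onD[OF assms(1), of "1 - t"] t assms(2,3) q by simp
  ultimately show ?thesis by (simp add: algebra_simps)
qed

lemma sum_remove_two:
  assumes "finite A" "a \<in> A" "b \<in> A" "a \<noteq> b"
  shows "sum f A = f a + f b + sum f (A - {a, b})"
  using assms
  by (simp add: sum.remove[of A a] sum.remove[of "A - {a}" b] Diff_insert2[symmetric] add.assoc)

definition allocation :: "'i set \<Rightarrow> ('i \<Rightarrow> real) \<Rightarrow> real \<Rightarrow> ('i \<Rightarrow> real) \<Rightarrow> bool" where
  "allocation I C X y \<longleftrightarrow> (\<forall>i\<in>I. 0 \<le> y i \<and> y i \<le> C i) \<and> sum y I = X"

lemma feasible_eq_allocation: "feasible N C X = allocation {1..N} C X"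
  by (simp add: fun_eq_iff feasible_def allocation_def)

lemma allocation_total_nonneg: "allocation I C X y \<Longrightarrow> 0 \<le> X"
  unfolding allocation_def by (metis sum_nonneg)

lemma allocation_le_total:
  assumes "allocation I C X y" "finite I" "i \<in> I"
  shows "y i \<le> X"
  using assms member_le_sum[of i I y] unfolding allocation_def by auto

lemma allocation_transfer:
  fixes E :: "real \<Rightarrow> real"
  assumes alloc: "allocation I C X y" and "finite I" and ij: "n \<in> I" "j \<in> I" "n \<noteq> j"
    and conc: "concave_on {0..C n} E"
    and d: "0 \<le> d" "d \<le> y j" "y n + d \<le> C n" "y j \<le> y n + d"
  defines "y' \<equiv> y(n := y n + d, j := y j - d)"
  shows "allocation I C X y'" and "(\<Sum>i\<in>I. E (y' i)) \<le> (\<Sum>i\<in>I. E (y i))"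
proof -
  have split: "(\<Sum>i\<in>I. h (y' i)) = h (y n + d) + h (y j - d) + (\<Sum>i\<in>I - {n, j}. h (y i))"
    and split_y: "(\<Sum>i\<in>I. h (y i)) = h (y n) + h (y j) + (\<Sum>i\<in>I - {n, j}. h (y i))"
    for h :: "real \<Rightarrow> real"
    using sum_remove_two[OF \<open>finite I\<close> ij, of "\<lambda>i. h (y' i)"]
      sum_remove_two[OF \<open>finite I\<close> ij, of "\<lambda>i. h (y i)"] ij(3)
    by (auto simp: y'_def intro!: sum.cong)
  show "allocation I C X y'"
    using alloc ij d split[of id] split_y[of id] by (auto simp: allocation_def y'_def)
  have "y n \<ge> 0" using alloc ij by (simp add: allocation_def)
  then have "E (y j - d) + E (y n + d) \<le> E (y n) + E (y j)"
    using d by (intro concave_on_outer_pair_le[OF conc]) auto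
  then show "(\<Sum>i\<in>I. E (y' i)) \<le> (\<Sum>i\<in>I. E (y i))"
    using split[of E] split_y[of E] by simp
qed


lemma allocation_fill_largest:
  fixes E :: "real \<Rightarrow> real"
  assumes "finite I" "n \<in> I" and largest: "\<forall>j\<in>I. C j \<le> C n"
    and conc: "concave_on {0..C n} E" and "allocation I C X y"
  shows "\<exists>y'. allocation I C X y' \<and> y' n = min (C n) X \<and>
    (\<Sum>i\<in>I. E (y' i)) \<le> (\<Sum>i\<in>I. E (y i))"
  using \<open>allocation I C X y\<close>
  \<comment> \<open>Each transfer from a link j to n either fills n up to min (C n) X or empties j.\<close>
proof (induction "card {j\<in>I - {n}. 0 < y j}" arbitrary: y rule: less_induct)
  case less
  define a where "a = min (C n) X"
  have y_bounds: "\<And>i. i \<in> I \<Longrightarrow> 0 \<le> y i \<and> y i \<le> a"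
    using less.prems allocation_le_total[OF less.prems \<open>finite I\<close>] largest
    by (fastforce simp: allocation_def a_def)
  show ?case
  proof (cases "y n = a")
    case True
    then show ?thesis using less.prems a_def by blast
  next
    case False
    then have "y n < a" using y_bounds[OF \<open>n \<in> I\<close>] by (auto simp: a_def)
    moreover have "sum y I = y n + sum y (I - {n})"
      using \<open>finite I\<close> \<open>n \<in> I\<close> by (simp add: sum.remove)
    ultimately have "0 < sum y (I - {n})"
      using less.prems by (auto simp: allocation_def a_def)
    then obtain j where j: "j \<in> I" "j \<noteq> n" "0 < y j"
      by (metis (no_types, lifting) Diff_iff insertCI not_le sum_nonpos)
    define d where "d = min (y j) (a - y n)"
    define y' where "y' = y(n := y n + d, j := y j - d)"
    have "allocation I C X y'" and cost: "(\<Sum>i\<in>I. E (y' i)) \<le> (\<Sum>i\<in>I. E (y i))"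
      using allocation_transfer[OF less.prems \<open>finite I\<close> \<open>n \<in> I\<close> j(1) j(2)[symmetric] conc,
          of d, folded y'_def]
        y_bounds[OF \<open>n \<in> I\<close>] y_bounds[OF j(1)] \<open>y n < a\<close>
      by (auto simp: d_def a_def)
    show ?thesis
    proof (cases "d = a - y n")
      case True
      then have "y' n = a" using j(2) by (simp add: y'_def)
      then show ?thesis using \<open>allocation I C X y'\<close> cost a_def by blast
    next
      case False
      then have "y' j = 0" by (simp add: y'_def d_def min_def split: if_splits)
      then have "{i\<in>I - {n}. 0 < y' i} \<subset> {i\<in>I - {n}. 0 < y i}"
        using j \<open>y n < a\<close> by (auto simp: y'_def d_def)
      then have "card {i\<in>I - {n}. 0 < y' i} < card {i\<in>I - {n}. 0 < y i}"
        using \<open>finite I\<close> by (intro psubset_card_mono) auto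
      then show ?thesis
        using less.hyps[OF _ \<open>allocation I C X y'\<close>] cost by (meson order_trans)
    qed
  qed
qed


text \<open>Closed form of the sequential allocation started at link m; the outer max only
  matters for links lying beyond the point where the demand is used up.\<close>

definition water_fill :: "(nat \<Rightarrow> real) \<Rightarrow> nat \<Rightarrow> real \<Rightarrow> nat \<Rightarrow> real" where
  "water_fill C m X i = max 0 (min (C i) (X - (\<Sum>k=m..<i. C k)))"

lemma water_fill_first:
  "0 \<le> X \<Longrightarrow> 0 \<le> C m \<Longrightarrow> water_fill C m X m = min (C m) X"
  by (simp add: water_fill_def)

lemma water_fill_Suc:
  assumes "m < i" "0 \<le> X" and nonneg: "\<And>k. m < k \<Longrightarrow> k < i \<Longrightarrow> 0 \<le> C k"
  shows "water_fill C (Suc m) (X - min (C m) X) i = water_fill C m X i"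
proof -
  have "0 \<le> (\<Sum>k=Suc m..<i. C k)" by (auto intro!: sum_nonneg nonneg)
  moreover have "(\<Sum>k=m..<i. C k) = C m + (\<Sum>k=Suc m..<i. C k)"
    using assms(1) by (simp add: sum.atLeast_Suc_lessThan)
  ultimately show ?thesis by (auto simp: water_fill_def min_def max_def)
qed

lemma water_fill_prefix_sum:
  assumes "m \<le> i" "0 \<le> X" and nonneg: "\<And>k. m \<le> k \<Longrightarrow> k < i \<Longrightarrow> 0 \<le> C k"
  shows "(\<Sum>k=m..<i. water_fill C m X k) = min X (\<Sum>k=m..<i. C k)"
  using assms(1) nonneg
proof (induction i rule: dec_induct)
  case base
  then show ?case using \<open>0 \<le> X\<close> by simp
next
  case (step i)
  then have "(\<Sum>k=m..<i. water_fill C m X k) = min X (\<Sum>k=m..<i. C k)" and "0 \<le> C i"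
    by simp_all
  then show ?case
    using step.hyps(1) by (simp add: water_fill_def min_def max_def)
qed

lemma water_fill_eq_recursion:
  assumes "0 \<le> X" and nonneg: "\<And>k. m \<le> k \<Longrightarrow> k \<le> n \<Longrightarrow> 0 \<le> C k"
    and rec: "\<And>k. m \<le> k \<Longrightarrow> k \<le> n \<Longrightarrow> x k = min (C k) (X - (\<Sum>j=m..<k. x j))"
  shows "m \<le> i \<Longrightarrow> i \<le> n \<Longrightarrow> x i = water_fill C m X i"
proof (induction i rule: less_induct)
  case (less i)
  have "(\<Sum>j=m..<i. x j) = (\<Sum>j=m..<i. water_fill C m X j)"
    using less by (intro sum.cong) auto
  also have "\<dots> = min X (\<Sum>j=m..<i. C j)"
    using less.prems \<open>0 \<le> X\<close> nonneg by (intro water_fill_prefix_sum) auto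
  finally show ?case
    using rec[OF less.prems] nonneg[OF less.prems] by (auto simp: water_fill_def min_def max_def)
qed


locale link_capacities =
  fixes N :: nat and C :: "nat \<Rightarrow> real"
  assumes capacity_decreasing: "\<And>i. 1 \<le> i \<Longrightarrow> i < N \<Longrightarrow> C i \<ge> C (Suc i)"
    and last_capacity_pos: "C N > 0"
begin

lemma capacity_antimono:
  assumes "1 \<le> i" "i \<le> j" "j \<le> N"
  shows "C j \<le> C i"
  using assms(2,3)
proof (induction j rule: dec_induct)
  case (step j)
  then show ?case using capacity_decreasing[of j] assms(1) by simp
qed simp

lemma capacity_pos: "1 \<le> i \<Longrightarrow> i \<le> N \<Longrightarrow> 0 < C i"
  using capacity_antimono[of i N] last_capacity_pos by simp

lemma water_fill_allocation:
  assumes "1 \<le> m" "m \<le> Suc N" "0 \<le> X" "X \<le> (\<Sum>i=m..N. C i)"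
  shows "allocation {m..N} C X (water_fill C m X)"
proof -
  have "(\<Sum>i=m..<Suc N. water_fill C m X i) = min X (\<Sum>i=m..<Suc N. C i)"
    using assms capacity_pos by (intro water_fill_prefix_sum) (auto intro: less_imp_le)
  then have "(\<Sum>i=m..N. water_fill C m X i) = X"
    using assms(4) by (simp add: atLeastLessThanSuc_atLeastAtMost)
  moreover have "0 \<le> water_fill C m X i \<and> water_fill C m X i \<le> C i" if "i \<in> {m..N}" for i
    using capacity_pos[of i] that assms(1) by (auto simp: water_fill_def)
  ultimately show ?thesis by (simp add: allocation_def)
qed

lemma water_fill_optimal:
  fixes E :: "real \<Rightarrow> real"
  assumes conc: "concave_on {0..C 1} E"
  shows "m \<le> Suc N \<Longrightarrow> 1 \<le> m \<Longrightarrow> allocation {m..N} C X y \<Longrightarrow>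
    (\<Sum>i=m..N. E (water_fill C m X i)) \<le> (\<Sum>i=m..N. E (y i))"
proof (induction m arbitrary: X y rule: inc_induct)
  case base
  then show ?case by simp
next
  case (step n)
  define a where "a = min (C n) X"
  have n: "1 \<le> n" "n \<le> N" using step by auto
  have "concave_on {0..C n} E"
    using conc capacity_antimono[of 1 n] capacity_pos[OF n] n
    unfolding concave_on_def by (elim convex_on_subset) auto
  then obtain y' where y': "allocation {n..N} C X y'" "y' n = a"
    "(\<Sum>i=n..N. E (y' i)) \<le> (\<Sum>i=n..N. E (y i))"
    using allocation_fill_largest[of "{n..N}" n C E X y] capacity_antimono[OF n(1)] n step.prems(2)
    unfolding a_def by fastforce
  have X: "0 \<le> X" using allocation_total_nonneg[OF step.prems(2)] .
  have split: "(\<Sum>i=n..N. f i) = f n + (\<Sum>i=Suc n..N. f i)" for f :: "nat \<Rightarrow> real"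
    using n(2) by (simp add: sum.atLeast_Suc_atMost)
  have "allocation {Suc n..N} C (X - a) y'"
    using y'(1,2) split[of y'] by (auto simp: allocation_def)
  then have IH: "(\<Sum>i=Suc n..N. E (water_fill C (Suc n) (X - a) i)) \<le> (\<Sum>i=Suc n..N. E (y' i))"
    using step.IH by simp
  have shift: "(\<Sum>i=Suc n..N. E (water_fill C (Suc n) (X - a) i)) = (\<Sum>i=Suc n..N. E (water_fill C n X i))"
    unfolding a_def
  proof (intro sum.cong refl arg_cong[where f = E] water_fill_Suc[OF _ X])
    show "0 \<le> C k" if "i \<in> {Suc n..N}" "n < k" "k < i" for i k
      using capacity_pos[of k] that n(1) by simp
  qed auto
  have "(\<Sum>i=n..N. E (water_fill C n X i)) = E a + (\<Sum>i=Suc n..N. E (water_fill C n X i))"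
    using split water_fill_first[OF X] capacity_pos[OF n] unfolding a_def by simp
  also have "\<dots> \<le> E (y' n) + (\<Sum>i=Suc n..N. E (y' i))" using IH shift y'(2) by simp
  also have "\<dots> \<le> (\<Sum>i=n..N. E (y i))" using split y'(3) by simp
  finally show ?case .
qed

end

theorem proposition1:
  fixes N :: nat and C :: "nat \<Rightarrow> real" and X :: real
    and E :: "real \<Rightarrow> real" and x :: "nat \<Rightarrow> real"
  assumes "N \<ge> 1"
    and "\<And>i. 1 \<le> i \<Longrightarrow> i < N \<Longrightarrow> C i \<ge> C (Suc i)"
    and "C N > 0"
    and "0 \<le> X" and "X \<le> (\<Sum>i=1..N. C i)"
    and "strict_concave_on {0..C 1} E"
    and "\<And>i. 1 \<le> i \<Longrightarrow> i \<le> N \<Longrightarrow> x i = min (C i) (X - (\<Sum>j=1..<i. x j))"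
  shows "feasible N C X x \<and>
         (\<forall>y. feasible N C X y \<longrightarrow> (\<Sum>i=1..N. E (x i)) \<le> (\<Sum>i=1..N. E (y i)))"
proof -
  interpret link_capacities N C
    using assms(2,3) by unfold_locales
  have conc: "concave_on {0..C 1} E"
    using assms(6) by (intro strict_concave_on_imp_concave_on) auto
  have "x i = water_fill C 1 X i" if "i \<in> {1..N}" for i
    using water_fill_eq_recursion[OF assms(4) _ assms(7)] capacity_pos that
    by (simp add: less_imp_le)
  then have x: "(\<Sum>i=1..N. f (x i)) = (\<Sum>i=1..N. f (water_fill C 1 X i))"
    and "allocation {1..N} C X x = allocation {1..N} C X (water_fill C 1 X)" for f :: "real \<Rightarrow> real"
    by (auto simp: allocation_def intro: sum.cong)
  then show ?thesis
    using water_fill_allocation[of 1 X] water_fill_optimal[OF conc, of 1 X] assms(4,5)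
    by (simp add: feasible_eq_allocation)
qed

end
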